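(* On the $\kappa G^\#$-module $\Lambda_G$: (i) the dot product and the bracket are $\kappa G^\#$-bilinear; the dot product is symmetric and the bracket skew-symmetric; (ii) the bracket satisfies the Jacobi identity $[[\vec x,\vec y],\vec z]+[[\vec y,\vec z],\vec x]+[[\vec z,\vec x],\vec y]=0$; (iii) the map $(\vec x,\vec y,\vec z)\mapsto[\vec x,\vec y]\cdot\vec z$ is an alternating trilinear map; (iv) $[[\vec x,\vec y],\vec z]=(\vec x\cdot\vec z)\vec y-(\vec y\cdot\vec z)\vec x$ for all $\vec x,\vec y,\vec z\in\Lambda_G$.
   Context: Let $\kappa$ be a field of characteristic $0$ and $G$ a group. Let $*:\kappa G\to\kappa G$ be the $\kappa$-linear map with $g^*=g^{-1}$, $(\kappa G)^*$ its fixed points, and $A_G$ the quotient of $\kappa G$ by the two-sided ideal generated by all $ab-ba$, $a\in\kappa G$, $b\in(\kappa G)^*$; $*$ descends to $A_G$. Let $\kappa G^\#=\{x\in A_G:x^*=x\}$ (a commutative subring of the centre of $A_G$) and $\Lambda_G=\{x\in A_G:x^*=-x\}$, a $\kappa G^\#$-module. For $\vec x,\vec y\in\Lambda_G$ define $\vec x\cdot\vec y=-\tfrac12(\vec x\vec y+\vec y\vec x)\in\kappa G^\#$ and $[\vec x,\vec y]=\tfrac12(\vec x\vec y-\vec y\vec x)\in\Lambda_G$. *)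

theory Defs
  imports "HOL-Algebra.Group" "HOL-Library.Function_Algebras"
begin

text \<open>The group algebra kappa G, for a group G (HOL-Algebra) and a field 'k of
characteristic 0, is represented by finitely supported functions from the
carrier of G to 'k (vanishing outside the carrier). Addition, subtraction and
negation are pointwise (HOL-Library.Function_Algebras); multiplication is
convolution.\<close>

definition grp_alg :: "('g, 'm) monoid_scheme \<Rightarrow> ('g \<Rightarrow> 'k::field_char_0) set" where
  "grp_alg G = {f. finite {g. f g \<noteq> 0} \<and> (\<forall>g. g \<notin> carrier G \<longrightarrow> f g = 0)}"

definition conv :: "('g, 'm) monoid_scheme \<Rightarrow> ('g \<Rightarrow> 'k::field_char_0) \<Rightarrow> ('g \<Rightarrow> 'k) \<Rightarrow> ('g \<Rightarrow> 'k)" where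
  "conv G f h = (\<lambda>x. if x \<in> carrier G
      then (\<Sum>y\<in>{y \<in> carrier G. f y \<noteq> 0}. f y * h (inv\<^bsub>G\<^esub> y \<otimes>\<^bsub>G\<^esub> x)) else 0)"

definition smul :: "'k::field_char_0 \<Rightarrow> ('g \<Rightarrow> 'k) \<Rightarrow> ('g \<Rightarrow> 'k)" where
  "smul c f = (\<lambda>x. c * f x)"

text \<open>The involution *: the linear map with g* = g^-1, i.e. (f*)(x) = f(x^-1).\<close>
definition gstar :: "('g, 'm) monoid_scheme \<Rightarrow> ('g \<Rightarrow> 'k::field_char_0) \<Rightarrow> ('g \<Rightarrow> 'k)" where
  "gstar G f = (\<lambda>x. if x \<in> carrier G then f (inv\<^bsub>G\<^esub> x) else 0)"

definition sym_alg :: "('g, 'm) monoid_scheme \<Rightarrow> ('g \<Rightarrow> 'k::field_char_0) set" where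
  "sym_alg G = {b \<in> grp_alg G. gstar G b = b}"

inductive_set comm_ideal :: "('g, 'm) monoid_scheme \<Rightarrow> ('g \<Rightarrow> 'k::field_char_0) set"
  for G :: "('g, 'm) monoid_scheme" where
  gen: "a \<in> grp_alg G \<Longrightarrow> b \<in> sym_alg G \<Longrightarrow> conv G a b - conv G b a \<in> comm_ideal G"
| zero: "0 \<in> comm_ideal G"
| add: "x \<in> comm_ideal G \<Longrightarrow> y \<in> comm_ideal G \<Longrightarrow> x + y \<in> comm_ideal G"
| lmult: "r \<in> grp_alg G \<Longrightarrow> x \<in> comm_ideal G \<Longrightarrow> conv G r x \<in> comm_ideal G"
| rmult: "r \<in> grp_alg G \<Longrightarrow> x \<in> comm_ideal G \<Longrightarrow> conv G x r \<in> comm_ideal G"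

text \<open>Equality in A_G = kappa G / ideal, expressed on representatives.\<close>
definition AG_eq :: "('g, 'm) monoid_scheme \<Rightarrow> ('g \<Rightarrow> 'k::field_char_0) \<Rightarrow> ('g \<Rightarrow> 'k) \<Rightarrow> bool" where
  "AG_eq G x y \<longleftrightarrow> x - y \<in> comm_ideal G"

text \<open>Representatives of elements of kappa G^# (x* = x in A_G).\<close>
definition sharp_rep :: "('g, 'm) monoid_scheme \<Rightarrow> ('g \<Rightarrow> 'k::field_char_0) set" where
  "sharp_rep G = {s \<in> grp_alg G. AG_eq G (gstar G s) s}"

text \<open>Representatives of elements of Lambda_G (x* = -x in A_G).\<close>
definition Lam_rep :: "('g, 'm) monoid_scheme \<Rightarrow> ('g \<Rightarrow> 'k::field_char_0) set" where
  "Lam_rep G = {x \<in> grp_alg G. AG_eq G (gstar G x) (- x)}"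

definition gdot :: "('g, 'm) monoid_scheme \<Rightarrow> ('g \<Rightarrow> 'k::field_char_0) \<Rightarrow> ('g \<Rightarrow> 'k) \<Rightarrow> ('g \<Rightarrow> 'k)" where
  "gdot G x y = smul (- 1 / 2) (conv G x y + conv G y x)"

definition gbr :: "('g, 'm) monoid_scheme \<Rightarrow> ('g \<Rightarrow> 'k::field_char_0) \<Rightarrow> ('g \<Rightarrow> 'k) \<Rightarrow> ('g \<Rightarrow> 'k)" where
  "gbr G x y = smul (1 / 2) (conv G x y - conv G y x)"

definition gtri :: "('g, 'm) monoid_scheme \<Rightarrow> ('g \<Rightarrow> 'k::field_char_0) \<Rightarrow> ('g \<Rightarrow> 'k) \<Rightarrow> ('g \<Rightarrow> 'k) \<Rightarrow> ('g \<Rightarrow> 'k)" where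
  "gtri G x y z = gdot G (gbr G x y) z"

end

theory Submission
  imports Defs
begin

(* The proof works in an abstract setting.  Let R be a set of "algebra elements"
   carrying an associative bilinear product m, an anti-multiplicative linear
   involution st, a scalar h with h + h = 1, and a two-sided ideal I containing the
   commutators a b - b a with b fixed by st.  Work modulo I (the relation eqv).
   The one genuinely non-trivial ingredient is that every element fixed by st modulo I is
   central modulo I (Sh_central).  From it: anticommutators x y + y x of
   anti-self-adjoint elements are self-adjoint, hence central; this gives the
   kappa G^#-linearity of dot and bracket, the expansion of the double bracket
   (part iv) and the alternation of [x, y] . z, while additivity, symmetry and the
   Jacobi identity hold exactly, already in the ambient algebra. *)

text \<open>Elements of R live in a commutative ring 'a, which
  only supplies addition and the scalar h (acting by the ring multiplication); the
  algebra product is the separate operation m, the involution is st, and I is a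
  two-sided ideal containing the commutators [a, b] with st b = b.\<close>
locale involutive_quotient =
  fixes R :: "'a::comm_ring_1 set" and m :: "'a \<Rightarrow> 'a \<Rightarrow> 'a" and st :: "'a \<Rightarrow> 'a"
    and I :: "'a set" and h :: 'a
  assumes R_zero: "0 \<in> R" and R_add: "a \<in> R \<Longrightarrow> b \<in> R \<Longrightarrow> a + b \<in> R"
    and R_neg: "a \<in> R \<Longrightarrow> - a \<in> R" and R_half: "a \<in> R \<Longrightarrow> h * a \<in> R"
    and R_mult: "a \<in> R \<Longrightarrow> b \<in> R \<Longrightarrow> m a b \<in> R"
    and R_star: "a \<in> R \<Longrightarrow> st a \<in> R"
    and mult_add_left: "a \<in> R \<Longrightarrow> b \<in> R \<Longrightarrow> c \<in> R \<Longrightarrow> m (a + b) c = m a c + m b c"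
    and mult_add_right: "a \<in> R \<Longrightarrow> b \<in> R \<Longrightarrow> c \<in> R \<Longrightarrow> m a (b + c) = m a b + m a c"
    and mult_half_left: "a \<in> R \<Longrightarrow> b \<in> R \<Longrightarrow> m (h * a) b = h * m a b"
    and mult_half_right: "a \<in> R \<Longrightarrow> b \<in> R \<Longrightarrow> m a (h * b) = h * m a b"
    and mult_assoc: "a \<in> R \<Longrightarrow> b \<in> R \<Longrightarrow> c \<in> R \<Longrightarrow> m (m a b) c = m a (m b c)"
    and star_add: "a \<in> R \<Longrightarrow> b \<in> R \<Longrightarrow> st (a + b) = st a + st b"
    and star_half: "a \<in> R \<Longrightarrow> st (h * a) = h * st a"
    and star_star: "a \<in> R \<Longrightarrow> st (st a) = a"
    and star_mult: "a \<in> R \<Longrightarrow> b \<in> R \<Longrightarrow> st (m a b) = m (st b) (st a)"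
    and I_zero: "0 \<in> I"
    and I_add: "x \<in> I \<Longrightarrow> y \<in> I \<Longrightarrow> x + y \<in> I"
    and I_neg: "x \<in> I \<Longrightarrow> - x \<in> I" and I_half: "x \<in> I \<Longrightarrow> h * x \<in> I"
    and I_mult_left: "r \<in> R \<Longrightarrow> x \<in> I \<Longrightarrow> m r x \<in> I"
    and I_mult_right: "r \<in> R \<Longrightarrow> x \<in> I \<Longrightarrow> m x r \<in> I"
    and I_commutator: "a \<in> R \<Longrightarrow> b \<in> R \<Longrightarrow> st b = b \<Longrightarrow> m a b - m b a \<in> I"
    and half_half: "h + h = 1"
begin

lemma R_diff: "a \<in> R \<Longrightarrow> b \<in> R \<Longrightarrow> a - b \<in> R"
  using R_add R_neg by (metis diff_conv_add_uminus)

lemma mult_zero_left: "b \<in> R \<Longrightarrow> m 0 b = 0"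
  using mult_add_left[of 0 0 b] R_zero by simp

lemma mult_zero_right: "a \<in> R \<Longrightarrow> m a 0 = 0"
  using mult_add_right[of a 0 0] R_zero by simp

lemma mult_neg_left: "a \<in> R \<Longrightarrow> b \<in> R \<Longrightarrow> m (- a) b = - m a b"
  using mult_add_left[of a "- a" b] mult_zero_left R_neg
  by (simp add: eq_neg_iff_add_eq_0 add.commute)

lemma mult_neg_right: "a \<in> R \<Longrightarrow> b \<in> R \<Longrightarrow> m b (- a) = - m b a"
  using mult_add_right[of b a "- a"] mult_zero_right R_neg
  by (simp add: eq_neg_iff_add_eq_0 add.commute)

lemma mult_diff_left: "a \<in> R \<Longrightarrow> b \<in> R \<Longrightarrow> c \<in> R \<Longrightarrow> m (a - b) c = m a c - m b c"
  using mult_add_left[of a "- b" c] R_neg mult_neg_left by simp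

lemma mult_diff_right: "a \<in> R \<Longrightarrow> b \<in> R \<Longrightarrow> c \<in> R \<Longrightarrow> m c (a - b) = m c a - m c b"
  using mult_add_right[of c a "- b"] R_neg mult_neg_right by simp

lemma star_neg: "a \<in> R \<Longrightarrow> st (- a) = - st a"
  using star_add[of a "- a"] star_add[of 0 0] R_zero R_neg by (simp add: eq_neg_iff_add_eq_0)

lemma star_diff: "a \<in> R \<Longrightarrow> b \<in> R \<Longrightarrow> st (a - b) = st a - st b"
  using star_add[of a "- b"] R_neg star_neg by simp

lemmas R_closed [simp] = R_zero R_add R_neg R_diff R_half R_mult R_star
lemmas algebra_rules [simp] = mult_zero_left mult_zero_right mult_add_left mult_add_right
  mult_neg_left mult_neg_right mult_diff_left mult_diff_right mult_half_left mult_half_right mult_assoc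
  star_add star_neg star_diff star_half star_star star_mult

lemma half_double: "h * (h * (2 * a)) = h * a"
proof -
  have "h * (h * (2 * a)) = h * ((h + h) * a)" by (simp add: algebra_simps)
  then show ?thesis by (simp add: half_half)
qed

definition eqv :: "'a \<Rightarrow> 'a \<Rightarrow> bool" where
  "eqv a b \<longleftrightarrow> a - b \<in> I"

lemma eqv_refl [simp]: "eqv a a"
  by (simp add: eqv_def I_zero)

lemma eqv_sym: "eqv a b \<Longrightarrow> eqv b a"
  unfolding eqv_def using I_neg by (metis minus_diff_eq)

lemma eqv_trans [trans]: "eqv a b \<Longrightarrow> eqv b c \<Longrightarrow> eqv a c"
  unfolding eqv_def using I_add by fastforce

lemma eqv_add: "eqv a b \<Longrightarrow> eqv c d \<Longrightarrow> eqv (a + c) (b + d)"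
proof -
  have "(a + c) - (b + d) = (a - b) + (c - d)" by simp
  then show "eqv a b \<Longrightarrow> eqv c d \<Longrightarrow> eqv (a + c) (b + d)" unfolding eqv_def using I_add by metis
qed

lemma eqv_neg: "eqv a b \<Longrightarrow> eqv (- a) (- b)"
  unfolding eqv_def using I_neg by (metis minus_diff_eq diff_minus_eq_add uminus_add_conv_diff)

lemma eqv_diff: "eqv a b \<Longrightarrow> eqv c d \<Longrightarrow> eqv (a - c) (b - d)"
  using eqv_add eqv_neg by (metis diff_conv_add_uminus)

lemma eqv_half: "eqv a b \<Longrightarrow> eqv (h * a) (h * b)"
  unfolding eqv_def using I_half by (metis right_diff_distrib)

lemma eqv_mult_left: "eqv a b \<Longrightarrow> a \<in> R \<Longrightarrow> b \<in> R \<Longrightarrow> c \<in> R \<Longrightarrow> eqv (m c a) (m c b)"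
  unfolding eqv_def using I_mult_left by (metis mult_diff_right)

lemma eqv_mult_right: "eqv a b \<Longrightarrow> a \<in> R \<Longrightarrow> b \<in> R \<Longrightarrow> c \<in> R \<Longrightarrow> eqv (m a c) (m b c)"
  unfolding eqv_def using I_mult_right by (metis mult_diff_left)

text \<open>Representatives of the self-adjoint part (the ring of scalars) and of the
  anti-self-adjoint part of the quotient.\<close>
definition Sh :: "'a set" where "Sh = {s \<in> R. eqv (st s) s}"
definition Lam :: "'a set" where "Lam = {x \<in> R. eqv (st x) (- x)}"

definition dot :: "'a \<Rightarrow> 'a \<Rightarrow> 'a" where "dot x y = - (h * (m x y + m y x))"
definition br :: "'a \<Rightarrow> 'a \<Rightarrow> 'a" where "br x y = h * (m x y - m y x)"
definition T :: "'a \<Rightarrow> 'a \<Rightarrow> 'a \<Rightarrow> 'a" where "T x y z = dot (br x y) z"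

lemma Sh_R: "s \<in> Sh \<Longrightarrow> s \<in> R" and Lam_R: "x \<in> Lam \<Longrightarrow> x \<in> R"
  by (auto simp: Sh_def Lam_def)

lemma dot_R [simp]: "x \<in> R \<Longrightarrow> y \<in> R \<Longrightarrow> dot x y \<in> R"
  and br_R [simp]: "x \<in> R \<Longrightarrow> y \<in> R \<Longrightarrow> br x y \<in> R"
  by (simp_all add: dot_def br_def)

text \<open>The symmetrisation
  of s is exactly fixed by the involution, hence central by the defining relations,
  and s differs from it by an element of I.\<close>
lemma Sh_central:
  assumes s: "s \<in> Sh" and a: "a \<in> R"
  shows "eqv (m s a) (m a s)"
proof -
  define s0 where "s0 = h * (s + st s)"
  have sR: "s \<in> R" and s0R: "s0 \<in> R" using s by (auto simp: Sh_def s0_def)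
  have "s - st s \<in> I" using s eqv_sym by (simp add: Sh_def eqv_def)
  moreover have "s - s0 = h * (s - st s)"
    using half_half by (simp add: s0_def algebra_simps flip: distrib_right)
  ultimately have "eqv s s0" using I_half by (simp add: eqv_def)
  have s0_fixed: "st s0 = s0" using sR by (simp add: s0_def add.commute)
  have "eqv (m s a) (m s0 a)" using \<open>eqv s s0\<close> sR s0R a by (rule eqv_mult_right)
  also have "eqv (m s0 a) (m a s0)"
    using I_commutator[OF a s0R s0_fixed] eqv_sym[of "m a s0" "m s0 a"] by (simp add: eqv_def)
  also have "eqv (m a s0) (m a s)"
    using \<open>eqv s s0\<close> sR s0R a by (intro eqv_mult_left) (auto intro: eqv_sym)
  finally show ?thesis .
qed

text \<open>For x, y in Lam the involution reverses the product and cancels both signs.\<close>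
lemma star_mult_Lam:
  assumes x: "x \<in> Lam" and y: "y \<in> Lam"
  shows "eqv (st (m x y)) (m y x)"
proof -
  have R: "x \<in> R" "y \<in> R" and sx: "eqv (st x) (- x)" and sy: "eqv (st y) (- y)"
    using x y by (auto simp: Lam_def)
  have "eqv (st (m x y)) (m (- y) (st x))"
    using eqv_mult_right[OF sy, of "st x"] R by simp
  also have "eqv (m (- y) (st x)) (m (- y) (- x))"
    using eqv_mult_left[OF sx, of "- y"] R by simp
  finally show ?thesis using R by simp
qed

lemma Sh_half: "s \<in> Sh \<Longrightarrow> h * s \<in> Sh"
  and Sh_neg: "s \<in> Sh \<Longrightarrow> - s \<in> Sh"
  by (auto simp: Sh_def intro: eqv_half eqv_neg)

lemma anticommutator_Sh:
  assumes "x \<in> Lam" "y \<in> Lam"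
  shows "m x y + m y x \<in> Sh"
  using eqv_add[OF star_mult_Lam[OF assms] star_mult_Lam[OF assms(2,1)]] assms
  by (simp add: Sh_def Lam_R add.commute)

lemma dot_Sh: "x \<in> Lam \<Longrightarrow> y \<in> Lam \<Longrightarrow> dot x y \<in> Sh"
  unfolding dot_def by (intro Sh_neg Sh_half anticommutator_Sh)

lemma square_Sh:
  assumes "x \<in> Lam"
  shows "m x x \<in> Sh"
proof -
  have "m x x = h * (m x x + m x x)"
    using half_half by (metis distrib_left distrib_right mult_1)
  then show ?thesis using Sh_half[OF anticommutator_Sh[OF assms assms]] by simp
qed

lemma br_Lam:
  assumes "x \<in> Lam" "y \<in> Lam"
  shows "br x y \<in> Lam"
proof -
  have R: "x \<in> R" "y \<in> R" using assms by (auto simp: Lam_R)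
  have "eqv (st (br x y)) (h * (m y x - m x y))"
    using eqv_half[OF eqv_diff[OF star_mult_Lam[OF assms] star_mult_Lam[OF assms(2,1)]]] R
    by (simp add: br_def)
  then show ?thesis using R by (simp add: Lam_def br_def algebra_simps)
qed

lemma dot_comm: "dot x y = dot y x"
  by (simp add: dot_def add.commute)

lemma br_anticomm: "- br y x = br x y"
  by (simp add: br_def algebra_simps)

lemma dot_add_left: "x \<in> R \<Longrightarrow> x' \<in> R \<Longrightarrow> y \<in> R \<Longrightarrow> dot (x + x') y = dot x y + dot x' y"
  and dot_add_right: "x \<in> R \<Longrightarrow> x' \<in> R \<Longrightarrow> y \<in> R \<Longrightarrow> dot y (x + x') = dot y x + dot y x'"
  and br_add_left: "x \<in> R \<Longrightarrow> x' \<in> R \<Longrightarrow> y \<in> R \<Longrightarrow> br (x + x') y = br x y + br x' y"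
  and br_add_right: "x \<in> R \<Longrightarrow> x' \<in> R \<Longrightarrow> y \<in> R \<Longrightarrow> br y (x + x') = br y x + br y x'"
  by (simp_all add: dot_def br_def algebra_simps)

lemma jacobi:
  "x \<in> R \<Longrightarrow> y \<in> R \<Longrightarrow> z \<in> R \<Longrightarrow> br (br x y) z + br (br y z) x + br (br z x) y = 0"
  by (simp add: br_def algebra_simps)

lemma Sh_pull_right:
  assumes s: "s \<in> Sh" and a: "a \<in> R" and b: "b \<in> R"
  shows "eqv (m a (m s b)) (m s (m a b))"
proof -
  have sR: "s \<in> R" using s by (rule Sh_R)
  have "eqv (m (m a s) b) (m (m s a) b)"
    using eqv_mult_right[OF eqv_sym[OF Sh_central[OF s a]]] sR a b by simp
  then show ?thesis using sR a b by simp
qed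

lemma dot_Sh_left:
  assumes s: "s \<in> Sh" and a: "a \<in> R" and b: "b \<in> R"
  shows "eqv (dot (m s a) b) (m s (dot a b))"
proof -
  have sR: "s \<in> R" using s by (rule Sh_R)
  have "eqv (dot (m s a) b) (- (h * (m s (m a b) + m s (m b a))))"
    unfolding dot_def using Sh_pull_right[OF s b a] sR a b
    by (intro eqv_neg eqv_half eqv_add) simp_all
  then show ?thesis using sR a b by (simp add: dot_def)
qed

lemma dot_Sh_right:
  assumes "s \<in> Sh" "a \<in> R" "b \<in> R"
  shows "eqv (dot a (m s b)) (m s (dot a b))"
  using dot_Sh_left[OF assms(1,3,2)] by (simp add: dot_comm)

lemma br_Sh_left:
  assumes s: "s \<in> Sh" and a: "a \<in> R" and b: "b \<in> R"
  shows "eqv (br (m s a) b) (m s (br a b))"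
proof -
  have sR: "s \<in> R" using s by (rule Sh_R)
  have "eqv (br (m s a) b) (h * (m s (m a b) - m s (m b a)))"
    unfolding br_def using Sh_pull_right[OF s b a] sR a b
    by (intro eqv_half eqv_diff) simp_all
  then show ?thesis using sR a b by (simp add: br_def)
qed

lemma br_Sh_right:
  assumes "s \<in> Sh" "a \<in> R" "b \<in> R"
  shows "eqv (br a (m s b)) (m s (br a b))"
proof -
  have "- m s (br b a) = m s (br a b)"
    using assms mult_neg_right[of "br b a" s] by (simp add: Sh_R br_anticomm)
  then show ?thesis
    using eqv_neg[OF br_Sh_left[OF assms(1,3,2)]] by (simp add: br_anticomm)
qed

lemma dot_cong_left:
  assumes "eqv a b" "a \<in> R" "b \<in> R" "c \<in> R"
  shows "eqv (dot a c) (dot b c)"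
  unfolding dot_def using assms
  by (intro eqv_neg eqv_half eqv_add eqv_mult_left[of a b c] eqv_mult_right[of a b c])

text \<open>The difference of
  the two sides is a combination of commutators of y and x with the self-adjoint
  anticommutators xz + zx and yz + zy, so it lies in I.\<close>
lemma double_bracket:
  assumes x: "x \<in> Lam" and y: "y \<in> Lam" and z: "z \<in> Lam"
  shows "eqv (br (br x y) z) (m (dot x z) y - m (dot y z) x)"
proof -
  have R: "x \<in> R" "y \<in> R" "z \<in> R" using x y z by (auto simp: Lam_R)
  define cxz where "cxz = m x z + m z x"
  define cyz where "cyz = m y z + m z y"
  have "eqv (m cxz y) (m y cxz)"
    using Sh_central[OF anticommutator_Sh[OF x z]] R by (simp add: cxz_def)
  moreover have "eqv (m cyz x) (m x cyz)"
    using Sh_central[OF anticommutator_Sh[OF y z]] R by (simp add: cyz_def)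
  ultimately have "h * (h * (m cxz y - m y cxz)) \<in> I" "h * (h * (m cyz x - m x cyz)) \<in> I"
    using I_half by (simp_all add: eqv_def)
  then have "h * (h * (m cxz y - m y cxz)) - h * (h * (m cyz x - m x cyz)) \<in> I"
    using I_add I_neg by (metis diff_conv_add_uminus)
  moreover have "br (br x y) z - (m (dot x z) y - m (dot y z) x)
        = h * (h * (m cxz y - m y cxz)) - h * (h * (m cyz x - m x cyz))"
    using R by (simp add: cxz_def cyz_def br_def dot_def algebra_simps half_double)
  ultimately show ?thesis by (simp add: eqv_def)
qed

lemma T_add_1: "x \<in> R \<Longrightarrow> x' \<in> R \<Longrightarrow> y \<in> R \<Longrightarrow> z \<in> R \<Longrightarrow> T (x + x') y z = T x y z + T x' y z"
  and T_add_2: "x \<in> R \<Longrightarrow> x' \<in> R \<Longrightarrow> y \<in> R \<Longrightarrow> z \<in> R \<Longrightarrow> T y (x + x') z = T y x z + T y x' z"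
  and T_add_3: "x \<in> R \<Longrightarrow> x' \<in> R \<Longrightarrow> y \<in> R \<Longrightarrow> z \<in> R \<Longrightarrow> T y z (x + x') = T y z x + T y z x'"
  by (simp_all add: T_def dot_def br_def algebra_simps)

lemma T_Sh_1:
  assumes s: "s \<in> Sh" and R: "x \<in> R" "y \<in> R" "z \<in> R"
  shows "eqv (T (m s x) y z) (m s (T x y z))"
proof -
  have sR: "s \<in> R" using s by (rule Sh_R)
  have "eqv (dot (br (m s x) y) z) (dot (m s (br x y)) z)"
    using br_Sh_left[OF s R(1,2)] sR R by (intro dot_cong_left) simp_all
  also have "eqv (dot (m s (br x y)) z) (m s (dot (br x y) z))"
    using dot_Sh_left[OF s] R by simp
  finally show ?thesis by (simp add: T_def)
qed

lemma T_Sh_2: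
  assumes s: "s \<in> Sh" and R: "x \<in> R" "y \<in> R" "z \<in> R"
  shows "eqv (T x (m s y) z) (m s (T x y z))"
proof -
  have sR: "s \<in> R" using s by (rule Sh_R)
  have "eqv (dot (br x (m s y)) z) (dot (m s (br x y)) z)"
    using br_Sh_right[OF s R(1,2)] sR R by (intro dot_cong_left) simp_all
  also have "eqv (dot (m s (br x y)) z) (m s (dot (br x y) z))"
    using dot_Sh_left[OF s] R by simp
  finally show ?thesis by (simp add: T_def)
qed

lemma T_Sh_3: "s \<in> Sh \<Longrightarrow> x \<in> R \<Longrightarrow> y \<in> R \<Longrightarrow> z \<in> R \<Longrightarrow> eqv (T x y (m s z)) (m s (T x y z))"
  unfolding T_def by (rule dot_Sh_right) simp_all

text \<open>The triple product is alternating: [x, x] = 0 exactly, while the other two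
  cases reduce to the commutator of y with the self-adjoint square x x.\<close>
lemma T_alternating:
  assumes x: "x \<in> Lam" and y: "y \<in> R"
  shows "T x x y = 0" and "eqv (T x y x) 0" and "eqv (T y x x) 0"
proof -
  have xR: "x \<in> R" using x by (rule Lam_R)
  show "T x x y = 0" using xR y by (simp add: T_def br_def dot_def)
  have "m (m x x) y - m y (m x x) \<in> I"
    using Sh_central[OF square_Sh[OF x] y] by (simp add: eqv_def)
  then have q: "h * (h * (m (m x x) y - m y (m x x))) \<in> I" using I_half by simp
  have "T x y x = - (h * (h * (m (m x x) y - m y (m x x))))"
    and "T y x x = h * (h * (m (m x x) y - m y (m x x)))"
    using xR y by (simp_all add: T_def dot_def br_def algebra_simps)
  then show "eqv (T x y x) 0" and "eqv (T y x x) 0"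
    using q I_neg by (simp_all add: eqv_def)
qed

end

definition fsupp :: "('g \<Rightarrow> 'k::zero) \<Rightarrow> 'g set" where
  "fsupp f = {y. f y \<noteq> 0}"

lemma neg_as_cmult: "- f = (\<lambda>_. - 1) * (f :: 'g \<Rightarrow> 'k::ring_1)"
  by (simp add: fun_eq_iff)

context group
begin

lemma mult_inv_cancel: "x \<in> carrier G \<Longrightarrow> y \<in> carrier G \<Longrightarrow> x \<otimes> (inv x \<otimes> y) = y"
  by (simp add: m_assoc[symmetric] r_inv)

lemma inv_mult_cancel: "x \<in> carrier G \<Longrightarrow> y \<in> carrier G \<Longrightarrow> inv x \<otimes> (x \<otimes> y) = y"
  by (simp add: m_assoc[symmetric] l_inv)

lemma sum_translate:
  assumes "u \<in> carrier G" "A \<subseteq> carrier G"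
  shows "(\<Sum>z\<in>(\<lambda>y. u \<otimes> y) ` A. F z) = (\<Sum>y\<in>A. F (u \<otimes> y))"
proof -
  have "inj_on (\<lambda>y. u \<otimes> y) A"
    using assms by (intro inj_onI) (metis inv_mult_cancel subsetD)
  then show ?thesis by (simp add: sum.reindex)
qed

lemma grp_alg_iff: "f \<in> grp_alg G \<longleftrightarrow> finite (fsupp f) \<and> fsupp f \<subseteq> carrier G"
  by (auto simp: grp_alg_def fsupp_def)

lemma grp_alg_outside: "f \<in> grp_alg G \<Longrightarrow> g \<notin> carrier G \<Longrightarrow> f g = 0"
  by (simp add: grp_alg_def)

lemma conv_eq:
  assumes f: "f \<in> grp_alg G" and A: "finite A" "fsupp f \<subseteq> A"
  shows "conv G f k = (\<lambda>x. if x \<in> carrier G then \<Sum>y\<in>A. f y * k (inv y \<otimes> x) else 0)"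
proof (rule ext)
  fix x
  have "{y \<in> carrier G. f y \<noteq> 0} \<subseteq> A" using A by (auto simp: fsupp_def)
  then have "(\<Sum>y\<in>{y \<in> carrier G. f y \<noteq> 0}. f y * k (inv y \<otimes> x)) = (\<Sum>y\<in>A. f y * k (inv y \<otimes> x))"
    by (rule sum.mono_neutral_left[OF A(1)]) (use grp_alg_outside[OF f] in auto)
  then show "conv G f k x = (if x \<in> carrier G then \<Sum>y\<in>A. f y * k (inv y \<otimes> x) else 0)"
    by (simp add: conv_def)
qed

lemma fsupp_conv:
  assumes "f \<in> grp_alg G"
  shows "fsupp (conv G f k) \<subseteq> (\<lambda>(a, b). a \<otimes> b) ` (fsupp f \<times> fsupp k)"
proof
  fix x assume "x \<in> fsupp (conv G f k)"
  then have x: "x \<in> carrier G" and s: "(\<Sum>y\<in>{y \<in> carrier G. f y \<noteq> 0}. f y * k (inv y \<otimes> x)) \<noteq> 0"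
    by (auto simp: fsupp_def conv_def split: if_splits)
  from sum.not_neutral_contains_not_neutral[OF s] obtain y where
    y: "y \<in> carrier G" "f y \<noteq> 0" "k (inv y \<otimes> x) \<noteq> 0" by auto
  have "x = y \<otimes> (inv y \<otimes> x)" using x y mult_inv_cancel by simp
  then show "x \<in> (\<lambda>(a, b). a \<otimes> b) ` (fsupp f \<times> fsupp k)"
    using y by (intro image_eqI[of _ _ "(y, inv y \<otimes> x)"]) (auto simp: fsupp_def)
qed

lemma alg_zero: "0 \<in> grp_alg G"
  by (simp add: grp_alg_def)

lemma alg_add:
  assumes "f \<in> grp_alg G" "g \<in> grp_alg G"
  shows "f + g \<in> grp_alg G"
proof -
  have "fsupp (f + g) \<subseteq> fsupp f \<union> fsupp g" by (auto simp: fsupp_def)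
  then show ?thesis using assms by (auto simp: grp_alg_iff intro: finite_subset)
qed

lemma alg_cmult:
  assumes "f \<in> grp_alg G"
  shows "(\<lambda>_. c) * f \<in> grp_alg G"
proof -
  have "fsupp ((\<lambda>_. c) * f) \<subseteq> fsupp f" by (auto simp: fsupp_def)
  then show ?thesis using assms by (auto simp: grp_alg_iff intro: finite_subset)
qed

lemma alg_neg: "f \<in> grp_alg G \<Longrightarrow> - f \<in> grp_alg G"
  using alg_cmult[of f "- 1"] by (simp add: neg_as_cmult)

lemma alg_conv:
  assumes "f \<in> grp_alg G" "k \<in> grp_alg G"
  shows "conv G f k \<in> grp_alg G"
proof -
  have "finite ((\<lambda>(a, b). a \<otimes> b) ` (fsupp f \<times> fsupp k))"
    using assms by (simp add: grp_alg_iff)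
  then have "finite (fsupp (conv G f k))" using fsupp_conv[OF assms(1)] by (rule finite_subset[rotated])
  moreover have "fsupp (conv G f k) \<subseteq> carrier G" by (auto simp: fsupp_def conv_def)
  ultimately show ?thesis by (simp add: grp_alg_iff)
qed

lemma alg_gstar:
  assumes "f \<in> grp_alg G"
  shows "gstar G f \<in> grp_alg G"
proof -
  have "fsupp (gstar G f) \<subseteq> (\<lambda>y. inv y) ` fsupp f"
    by (auto simp: fsupp_def gstar_def split: if_splits intro!: image_eqI[where x = "inv _"])
  then have "finite (fsupp (gstar G f))" using assms by (auto simp: grp_alg_iff intro: finite_subset)
  moreover have "fsupp (gstar G f) \<subseteq> carrier G" by (auto simp: fsupp_def gstar_def)
  ultimately show ?thesis by (simp add: grp_alg_iff)
qed

lemma conv_add_left: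
  assumes "f \<in> grp_alg G" "g \<in> grp_alg G"
  shows "conv G (f + g) k = conv G f k + conv G g k"
proof -
  let ?A = "fsupp f \<union> fsupp g"
  have fin: "finite ?A" using assms by (simp add: grp_alg_iff)
  have "fsupp (f + g) \<subseteq> ?A" by (auto simp: fsupp_def)
  then show ?thesis
    using conv_eq[OF alg_add[OF assms] fin] conv_eq[OF assms(1) fin] conv_eq[OF assms(2) fin]
    by (auto simp: sum.distrib distrib_right)
qed

lemma conv_add_right:
  assumes "f \<in> grp_alg G"
  shows "conv G f (g + k) = conv G f g + conv G f k"
  using assms by (auto simp: conv_def sum.distrib distrib_left)

lemma conv_cmult_left:
  assumes "f \<in> grp_alg G"
  shows "conv G ((\<lambda>_. c) * f) k = (\<lambda>_. c) * conv G f k"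
proof -
  have fin: "finite (fsupp f)" using assms by (simp add: grp_alg_iff)
  have "fsupp ((\<lambda>_. c) * f) \<subseteq> fsupp f" by (auto simp: fsupp_def)
  then show ?thesis
    using conv_eq[OF alg_cmult[OF assms] fin] conv_eq[OF assms fin subset_refl]
    by (auto simp: sum_distrib_left mult.assoc)
qed

lemma conv_cmult_right: "conv G f ((\<lambda>_. c) * k) = (\<lambda>_. c) * conv G f k"
  by (auto simp: conv_def sum_distrib_left mult.left_commute)

lemma conv_at_translate:
  assumes g: "g \<in> grp_alg G" and u: "u \<in> carrier G" and x: "x \<in> carrier G"
    and P: "finite P" "P \<subseteq> carrier G" "\<And>w. w \<in> fsupp g \<Longrightarrow> u \<otimes> w \<in> P"
  shows "conv G g k (inv u \<otimes> x) = (\<Sum>y\<in>P. g (inv u \<otimes> y) * k (inv y \<otimes> x))"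
proof -
  let ?W = "(\<lambda>y. inv u \<otimes> y) ` P"
  have sW: "fsupp g \<subseteq> ?W"
  proof
    fix w assume w: "w \<in> fsupp g"
    then have "w = inv u \<otimes> (u \<otimes> w)" using g u by (simp add: inv_mult_cancel grp_alg_iff subset_iff)
    then show "w \<in> ?W" using P(3)[OF w] by blast
  qed
  have "conv G g k (inv u \<otimes> x) = (\<Sum>w\<in>?W. g w * k (inv w \<otimes> (inv u \<otimes> x)))"
    using conv_eq[OF g finite_imageI[OF P(1)] sW] u x by simp
  also have "\<dots> = (\<Sum>y\<in>P. g (inv u \<otimes> y) * k (inv (inv u \<otimes> y) \<otimes> (inv u \<otimes> x)))"
    using P(2) u by (simp add: sum_translate)
  also have "\<dots> = (\<Sum>y\<in>P. g (inv u \<otimes> y) * k (inv y \<otimes> x))"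
    using P(2) u x by (intro sum.cong) (auto simp: inv_mult_group m_assoc mult_inv_cancel)
  finally show ?thesis .
qed

lemma conv_assoc:
  assumes f: "f \<in> grp_alg G" and g: "g \<in> grp_alg G" and k: "k \<in> grp_alg G"
  shows "conv G (conv G f g) k = conv G f (conv G g k)"
proof (rule ext)
  fix x
  define P where "P = (\<lambda>(a, b). a \<otimes> b) ` (fsupp f \<times> fsupp g)"
  have P: "finite P" "P \<subseteq> carrier G" using f g by (auto simp: P_def grp_alg_iff)
  have F: "finite (fsupp f)" "fsupp f \<subseteq> carrier G" using f by (simp_all add: grp_alg_iff)
  show "conv G (conv G f g) k x = conv G f (conv G g k) x"
  proof (cases "x \<in> carrier G")
    case False then show ?thesis by (simp add: conv_def)
  next
    case x: True
    have "conv G (conv G f g) k x = (\<Sum>y\<in>P. conv G f g y * k (inv y \<otimes> x))"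
      using conv_eq[OF alg_conv[OF f g] P(1) fsupp_conv[OF f, of g, folded P_def]] x by simp
    also have "\<dots> = (\<Sum>y\<in>P. (\<Sum>u\<in>fsupp f. f u * g (inv u \<otimes> y)) * k (inv y \<otimes> x))"
      using conv_eq[OF f F(1) subset_refl] P(2) by (intro sum.cong) auto
    also have "\<dots> = (\<Sum>u\<in>fsupp f. f u * (\<Sum>y\<in>P. g (inv u \<otimes> y) * k (inv y \<otimes> x)))"
      by (simp add: sum_distrib_right sum_distrib_left mult.assoc sum.swap[of _ P])
    also have "\<dots> = (\<Sum>u\<in>fsupp f. f u * conv G g k (inv u \<otimes> x))"
      using F(2) x P by (intro sum.cong refl arg_cong[where f = "(*) _"] conv_at_translate[OF g, symmetric])
        (auto simp: P_def)
    also have "\<dots> = conv G f (conv G g k) x"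
      using conv_eq[OF f F(1) subset_refl] x by simp
    finally show ?thesis .
  qed
qed

lemma gstar_add: "gstar G (f + g) = gstar G f + gstar G g"
  and gstar_cmult: "gstar G ((\<lambda>_. c) * f) = (\<lambda>_. c) * gstar G f"
  by (auto simp: gstar_def)

lemma gstar_gstar: "f \<in> grp_alg G \<Longrightarrow> gstar G (gstar G f) = f"
  by (auto simp: gstar_def grp_alg_outside)

text \<open>The involution reverses convolution products: substitute z = x y in the
  defining sum.\<close>
lemma gstar_conv:
  assumes f: "f \<in> grp_alg G" and g: "g \<in> grp_alg G"
  shows "gstar G (conv G f g) = conv G (gstar G g) (gstar G f)"
proof (rule ext)
  fix x
  show "gstar G (conv G f g) x = conv G (gstar G g) (gstar G f) x"
  proof (cases "x \<in> carrier G")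
    case False then show ?thesis by (simp add: conv_def gstar_def)
  next
    case x: True
    define A where "A = fsupp f \<union> (\<lambda>w. inv x \<otimes> inv w) ` fsupp g"
    have A: "finite A" "A \<subseteq> carrier G" using f g x by (auto simp: A_def grp_alg_iff)
    have sB: "fsupp (gstar G g) \<subseteq> (\<lambda>y. x \<otimes> y) ` A"
    proof
      fix z assume "z \<in> fsupp (gstar G g)"
      then have z: "z \<in> carrier G" "inv z \<in> fsupp g" by (auto simp: fsupp_def gstar_def split: if_splits)
      then have "inv x \<otimes> inv (inv z) \<in> A" unfolding A_def by blast
      moreover have "z = x \<otimes> (inv x \<otimes> inv (inv z))" using z x mult_inv_cancel by simp
      ultimately show "z \<in> (\<lambda>y. x \<otimes> y) ` A" by blast
    qed
    have "gstar G (conv G f g) x = (\<Sum>y\<in>A. f y * g (inv y \<otimes> inv x))"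
      using conv_eq[OF f A(1)] x by (simp add: gstar_def A_def)
    also have "\<dots> = (\<Sum>y\<in>A. gstar G g (x \<otimes> y) * gstar G f (inv (x \<otimes> y) \<otimes> x))"
      using A(2) x by (intro sum.cong)
        (auto simp: gstar_def inv_mult_group m_assoc inv_mult_cancel)
    also have "\<dots> = conv G (gstar G g) (gstar G f) x"
      using conv_eq[OF alg_gstar[OF g] _ sB] A x by (simp add: sum_translate)
    finally show ?thesis .
  qed
qed

lemma ideal_alg: "x \<in> comm_ideal G \<Longrightarrow> x \<in> grp_alg G"
proof (induction rule: comm_ideal.induct)
  case (gen a b)
  then have "conv G a b \<in> grp_alg G" "conv G b a \<in> grp_alg G"
    by (simp_all add: sym_alg_def alg_conv)
  then show ?case using alg_add alg_neg by (metis diff_conv_add_uminus)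
next
  case zero show ?case by (rule alg_zero)
next
  case (add x y) show ?case using add.IH by (rule alg_add)
next
  case (lmult r x) show ?case using lmult.hyps(1) lmult.IH by (rule alg_conv)
next
  case (rmult r x) show ?case using rmult.IH rmult.hyps(1) by (rule alg_conv)
qed

lemma ideal_cmult: "x \<in> comm_ideal G \<Longrightarrow> (\<lambda>_. c) * x \<in> comm_ideal G"
proof (induction rule: comm_ideal.induct)
  case (gen a b)
  then have "(\<lambda>_. c) * (conv G a b - conv G b a) = conv G ((\<lambda>_. c) * a) b - conv G b ((\<lambda>_. c) * a)"
    by (simp add: sym_alg_def conv_cmult_left conv_cmult_right right_diff_distrib)
  then show ?case using gen alg_cmult comm_ideal.gen by metis
next
  case zero then show ?case by (metis comm_ideal.zero mult_zero_right)
next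
  case (add x y) then show ?case by (metis distrib_left comm_ideal.add)
next
  case (lmult r x) then show ?case by (metis conv_cmult_right comm_ideal.lmult)
next
  case (rmult r x) then show ?case by (metis conv_cmult_left ideal_alg comm_ideal.rmult)
qed

lemma ideal_neg: "x \<in> comm_ideal G \<Longrightarrow> - x \<in> comm_ideal G"
  using ideal_cmult[of x "- 1"] by (simp add: neg_as_cmult)

end

lemma group_algebra_involutive_quotient:
  assumes "group G"
  shows "involutive_quotient (grp_alg G) (conv G) (gstar G) (comm_ideal G)
           ((\<lambda>_. 1 / 2) :: 'g \<Rightarrow> 'k::field_char_0)"
proof -
  interpret group G by fact
  show ?thesis
  proof unfold_locales
    show "(\<lambda>_. 1 / 2) + (\<lambda>_. 1 / 2) = (1 :: 'g \<Rightarrow> 'k)" by (simp add: fun_eq_iff)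
  qed (auto simp: alg_zero alg_add alg_neg alg_cmult alg_conv alg_gstar conv_add_left conv_add_right
      conv_cmult_left conv_cmult_right conv_assoc gstar_add gstar_cmult gstar_gstar gstar_conv
      ideal_alg ideal_neg ideal_cmult sym_alg_def
      intro: comm_ideal.zero comm_ideal.add comm_ideal.lmult comm_ideal.rmult comm_ideal.gen)
qed

theorem mainTheorem7:
  fixes G :: "('g, 'm) monoid_scheme"
  assumes "group G"
  defines "L \<equiv> (Lam_rep G :: ('g \<Rightarrow> 'k::field_char_0) set)"
      and "S \<equiv> (sharp_rep G :: ('g \<Rightarrow> 'k) set)"
      and "eqA \<equiv> AG_eq G" and "dot \<equiv> gdot G" and "br \<equiv> gbr G" and "T \<equiv> gtri G"
      and "mulA \<equiv> conv G"
  shows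
    \<comment> \<open>(i) well-typed, bilinear over kappa G^#, symmetric / skew-symmetric\<close>
    "((\<forall>x\<in>L. \<forall>y\<in>L. dot x y \<in> S \<and> br x y \<in> L)
     \<and> (\<forall>x\<in>L. \<forall>x'\<in>L. \<forall>y\<in>L.
          eqA (dot (x + x') y) (dot x y + dot x' y) \<and> eqA (dot y (x + x')) (dot y x + dot y x')
        \<and> eqA (br (x + x') y) (br x y + br x' y) \<and> eqA (br y (x + x')) (br y x + br y x'))
     \<and> (\<forall>s\<in>S. \<forall>x\<in>L. \<forall>y\<in>L.
          eqA (dot (mulA s x) y) (mulA s (dot x y)) \<and> eqA (dot x (mulA s y)) (mulA s (dot x y))
        \<and> eqA (br (mulA s x) y) (mulA s (br x y)) \<and> eqA (br x (mulA s y)) (mulA s (br x y)))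
     \<and> (\<forall>x\<in>L. \<forall>y\<in>L. eqA (dot x y) (dot y x) \<and> eqA (br x y) (- br y x)))
    \<comment> \<open>(ii) Jacobi identity\<close>
    \<and> (\<forall>x\<in>L. \<forall>y\<in>L. \<forall>z\<in>L. eqA (br (br x y) z + br (br y z) x + br (br z x) y) 0)
    \<comment> \<open>(iii) (x,y,z) |-> [x,y].z is alternating trilinear\<close>
    \<and> ((\<forall>x\<in>L. \<forall>x'\<in>L. \<forall>y\<in>L. \<forall>z\<in>L.
          eqA (T (x + x') y z) (T x y z + T x' y z)
        \<and> eqA (T y (x + x') z) (T y x z + T y x' z)
        \<and> eqA (T y z (x + x')) (T y z x + T y z x'))
     \<and> (\<forall>s\<in>S. \<forall>x\<in>L. \<forall>y\<in>L. \<forall>z\<in>L.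
          eqA (T (mulA s x) y z) (mulA s (T x y z))
        \<and> eqA (T x (mulA s y) z) (mulA s (T x y z))
        \<and> eqA (T x y (mulA s z)) (mulA s (T x y z)))
     \<and> (\<forall>x\<in>L. \<forall>y\<in>L. eqA (T x x y) 0 \<and> eqA (T x y x) 0 \<and> eqA (T y x x) 0))
    \<comment> \<open>(iv)\<close>
    \<and> (\<forall>x\<in>L. \<forall>y\<in>L. \<forall>z\<in>L. eqA (br (br x y) z) (mulA (dot x z) y - mulA (dot y z) x))"
proof -
  interpret A: involutive_quotient "grp_alg G" "conv G" "gstar G" "comm_ideal G"
      "(\<lambda>_. 1 / 2) :: 'g \<Rightarrow> 'k"
    using assms(1) by (rule group_algebra_involutive_quotient)
  have eqv: "AG_eq G = A.eqv" and Lam: "Lam_rep G = A.Lam" and Sh: "sharp_rep G = A.Sh"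
    by (simp_all add: fun_eq_iff AG_eq_def A.eqv_def Lam_rep_def A.Lam_def sharp_rep_def A.Sh_def)
  have dot: "gdot G = A.dot" and br: "gbr G = A.br"
    by (simp_all add: fun_eq_iff gdot_def A.dot_def gbr_def A.br_def smul_def)
  have T: "gtri G = A.T" by (simp add: fun_eq_iff gtri_def A.T_def dot br)
  have dot_sym: "A.eqv (A.dot x y) (A.dot y x)" for x y
    by (subst A.dot_comm) (rule A.eqv_refl)
  show ?thesis
    unfolding L_def S_def eqA_def dot_def br_def T_def mulA_def eqv Lam Sh dot br T
    using A.Lam_R A.Sh_R
    by (intro conjI ballI)
      (simp_all add: dot_sym A.dot_Sh A.br_Lam A.br_anticomm A.dot_add_left A.dot_add_right
      A.br_add_left A.br_add_right A.dot_Sh_left A.dot_Sh_right A.br_Sh_left A.br_Sh_right A.jacobi A.T_add_1 A.T_add_2 A.T_add_3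
      A.T_Sh_1 A.T_Sh_2 A.T_Sh_3 A.T_alternating A.double_bracket)
qed

end
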